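(* Let $\mathfrak{B}=\bigcup_{\alpha<\xi}B_\alpha$ be a tightly $\sigma$-filtered Boolean algebra with its fixed chain $(B_\alpha)_{\alpha<\xi}$ and countable subalgebras $R_\alpha,S_\alpha$. Let $\Delta,\Gamma_1,\ldots,\Gamma_n$ be saturated subsets of $\xi$ such that $\Gamma_i\cap\Gamma_j=\Delta$ for all $i\neq j$. Let $P(x_1,\ldots,x_n)$ be a Boolean polynomial and let $a_i\in E(\Gamma_i)$ ($i=1,\ldots,n$) satisfy $P(a_1,\ldots,a_n)=0$. Then there exist $r_i^-,r_i^+\in E(\Delta)$ with $r_i^-\le a_i\le r_i^+$ for each $i$ and $P(r_1^{\varepsilon_1},\ldots,r_n^{\varepsilon_n})=0$ for every choice of signs $\varepsilon_i\in\{+,-\}$.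
   Context: For a subset $X$ of a Boolean algebra, $\langle X\rangle$ is the subalgebra generated by $X$. Two subalgebras $A,S$ commute if whenever $a\in A$, $s\in S$, $a\wedge s=0$, there exist $b_1,b_2\in A\cap S$ with $a\le b_1$, $s\le b_2$, $b_1\wedge b_2=0$. A square of inclusions $R\subseteq A\subseteq B$, $R\subseteq S\subseteq B$ is a push-out diagram if $\langle A\cup S\rangle=B$, $A\cap S=R$, and $A,S$ commute. $\mathfrak{B}$ is tightly $\sigma$-filtered via an increasing chain of subalgebras $(B_\alpha)_{\alpha<\xi}$ ($\xi$ an ordinal) with $B_0=\{0,1\}$, $\mathfrak{B}=\bigcup_{\alpha<\xi}B_\alpha$, $B_\alpha=\bigcup_{\beta<\alpha}B_\beta$ for limit $\alpha$, and for each $\alpha<\xi$ countable subalgebras $R_\alpha,S_\alpha\subseteq\mathfrak{B}$ such that $R_\alpha\subseteq B_\alpha\subseteq B_{\alpha+1}$, $R_\alpha\subseteq S_\alpha\subseteq B_{\alpha+1}$ is a push-out diagram. For $\Gamma\subseteq\xi$, $E(\Gamma)=\langle\bigcup_{i\in\Gamma}S_i\rangle$. A set $\Gamma\subseteq\xi$ is saturated if $R_\gamma\subseteq E(\Gamma\cap\gamma)$ for every $\gamma\in\Gamma$. *)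

theory Defs
  imports Main "HOL-Library.Countable_Set"
begin

definition subalgebra :: "'b::boolean_algebra set \<Rightarrow> bool" where
  "subalgebra A \<longleftrightarrow> bot \<in> A \<and> top \<in> A \<and>
     (\<forall>x\<in>A. \<forall>y\<in>A. inf x y \<in> A \<and> sup x y \<in> A) \<and> (\<forall>x\<in>A. - x \<in> A)"

definition gen :: "'b::boolean_algebra set \<Rightarrow> 'b set" where
  "gen X = \<Inter> {A. subalgebra A \<and> X \<subseteq> A}"

definition commute :: "'b::boolean_algebra set \<Rightarrow> 'b set \<Rightarrow> bool" where
  "commute A S \<longleftrightarrow> (\<forall>a\<in>A. \<forall>s\<in>S. inf a s = bot \<longrightarrow>
     (\<exists>b1\<in>A \<inter> S. \<exists>b2\<in>A \<inter> S. a \<le> b1 \<and> s \<le> b2 \<and> inf b1 b2 = bot))"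

definition pushout :: "'b::boolean_algebra set \<Rightarrow> 'b set \<Rightarrow> 'b set \<Rightarrow> 'b set \<Rightarrow> bool" where
  "pushout R A S B \<longleftrightarrow> subalgebra R \<and> subalgebra A \<and> subalgebra S \<and> subalgebra B \<and>
     R \<subseteq> A \<and> A \<subseteq> B \<and> R \<subseteq> S \<and> S \<subseteq> B \<and>
     gen (A \<union> S) = B \<and> A \<inter> S = R \<and> commute A S"

section \<open>Tight sigma-filtrations, indexed by a well-ordered type (the ordinal xi)\<close>

definition is_limit :: "'o::wellorder \<Rightarrow> bool" where
  "is_limit \<alpha> \<longleftrightarrow> (\<exists>\<beta>. \<beta> < \<alpha>) \<and> (\<forall>\<beta><\<alpha>. \<exists>\<gamma>. \<beta> < \<gamma> \<and> \<gamma> < \<alpha>)"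

text \<open>B_(alpha+1); if alpha is the last index (alpha+1 = xi) this is the whole union.\<close>
definition next_stage :: "('o::wellorder \<Rightarrow> 'b set) \<Rightarrow> 'o \<Rightarrow> 'b set" where
  "next_stage B \<alpha> = (if \<exists>\<gamma>. \<alpha> < \<gamma> then B (LEAST \<gamma>. \<alpha> < \<gamma>) else \<Union> (range B))"

definition tightly_sigma_filtered ::
  "('o::wellorder \<Rightarrow> 'b::boolean_algebra set) \<Rightarrow> ('o \<Rightarrow> 'b set) \<Rightarrow> ('o \<Rightarrow> 'b set) \<Rightarrow> bool" where
  "tightly_sigma_filtered B R S \<longleftrightarrow>
     (\<forall>\<alpha>. subalgebra (B \<alpha>)) \<and> mono B \<and>
     (\<forall>\<alpha>. (\<forall>\<beta>. \<alpha> \<le> \<beta>) \<longrightarrow> B \<alpha> = {bot, top}) \<and>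
     \<Union> (range B) = UNIV \<and>
     (\<forall>\<alpha>. is_limit \<alpha> \<longrightarrow> B \<alpha> = \<Union> (B ` {..<\<alpha>})) \<and>
     (\<forall>\<alpha>. countable (R \<alpha>) \<and> countable (S \<alpha>) \<and>
           pushout (R \<alpha>) (B \<alpha>) (S \<alpha>) (next_stage B \<alpha>))"

definition E :: "('o \<Rightarrow> 'b::boolean_algebra set) \<Rightarrow> 'o set \<Rightarrow> 'b set" where
  "E S \<Gamma> = gen (\<Union> (S ` \<Gamma>))"

definition saturated :: "('o::wellorder \<Rightarrow> 'b::boolean_algebra set) \<Rightarrow> ('o \<Rightarrow> 'b set) \<Rightarrow> 'o set \<Rightarrow> bool" where
  "saturated R S \<Gamma> \<longleftrightarrow> (\<forall>\<gamma>\<in>\<Gamma>. R \<gamma> \<subseteq> E S (\<Gamma> \<inter> {..<\<gamma>}))"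

datatype bpoly = Var nat | Zero | One | Meet bpoly bpoly | Join bpoly bpoly | Neg bpoly

fun bvars :: "bpoly \<Rightarrow> nat set" where
  "bvars (Var i) = {i}"
| "bvars Zero = {}"
| "bvars One = {}"
| "bvars (Meet p q) = bvars p \<union> bvars q"
| "bvars (Join p q) = bvars p \<union> bvars q"
| "bvars (Neg p) = bvars p"

fun beval :: "bpoly \<Rightarrow> (nat \<Rightarrow> 'b::boolean_algebra) \<Rightarrow> 'b" where
  "beval (Var i) v = v i"
| "beval Zero v = bot"
| "beval One v = top"
| "beval (Meet p q) v = inf (beval p v) (beval q v)"
| "beval (Join p q) v = sup (beval p v) (beval q v)"
| "beval (Neg p) v = - beval p v"

end

theory Submission
  imports Defs
begin

text \<open>Say that D separates x from y if x \<le> d and d \<sqinter> y = 0 for some d \<in> D. The heart of the proof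
  is the case of two saturated sets: disjoint a1 \<in> E(G1) and a2 \<in> E(G2) are separated by
  E(G1 \<inter> G2). This is proved by transfinite induction along the filtration. An element of
  E(G \<inter> [0, \<alpha>]) is a finite join of meets c \<sqinter> s with c from the earlier stage and s \<in> S_\<alpha>; if \<alpha>
  lies in only one of the two sets, the push-out property of R_\<alpha> \<subseteq> B_\<alpha>, S_\<alpha> replaces s by an
  element of R_\<alpha>, which saturation places in an earlier stage, and if \<alpha> lies in both, s itself is
  available to the separating element.

  The polynomial statement follows by eliminating the variables one at a time. By the Shannon
  expansion P = (x_k \<sqinter> P[x_k:=1]) \<squnion> (-x_k \<sqinter> P[x_k:=0]), P(a) = 0 says that a_k and -a_k are
  disjoint from the two cofactors, which lie in E of \<Delta> and the remaining \<Gamma>_i. The separating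
  elements e1, e0 \<in> E(\<Delta>) give the bounds -e0 \<le> a_k \<le> e1, and the two disjointness conditions are carried
  along as a new polynomial in which e1 and e0 are parameters.\<close>

lemma subalgebra_bot: "subalgebra A \<Longrightarrow> bot \<in> A"
  and subalgebra_top: "subalgebra A \<Longrightarrow> top \<in> A"
  and subalgebra_inf: "subalgebra A \<Longrightarrow> x \<in> A \<Longrightarrow> y \<in> A \<Longrightarrow> inf x y \<in> A"
  and subalgebra_sup: "subalgebra A \<Longrightarrow> x \<in> A \<Longrightarrow> y \<in> A \<Longrightarrow> sup x y \<in> A"
  and subalgebra_compl: "subalgebra A \<Longrightarrow> x \<in> A \<Longrightarrow> - x \<in> A"
  unfolding subalgebra_def by blast+

lemma subalgebra_bot_top: "subalgebra {bot, top :: 'b::boolean_algebra}"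
  unfolding subalgebra_def by auto

lemma gen_upper: "X \<subseteq> gen X"
  unfolding gen_def by blast

lemma gen_least: "subalgebra A \<Longrightarrow> X \<subseteq> A \<Longrightarrow> gen X \<subseteq> A"
  unfolding gen_def by blast

lemma gen_mono: "X \<subseteq> Y \<Longrightarrow> gen X \<subseteq> gen Y"
  unfolding gen_def by blast

lemma subalgebra_gen: "subalgebra (gen X)"
  unfolding gen_def subalgebra_def by blast

lemma gen_empty: "gen {} \<subseteq> {bot, top :: 'b::boolean_algebra}"
  by (rule gen_least[OF subalgebra_bot_top]) simp

lemma gen_finite_support:
  assumes "x \<in> gen X"
  shows "\<exists>F. finite F \<and> F \<subseteq> X \<and> x \<in> gen F"
proof -
  define T where "T = {x. \<exists>F. finite F \<and> F \<subseteq> X \<and> x \<in> gen F}"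
  have closed: "f x y \<in> T"
    if xy: "x \<in> T" "y \<in> T" and f: "\<And>F. x \<in> gen F \<Longrightarrow> y \<in> gen F \<Longrightarrow> f x y \<in> gen F" for f x y
  proof -
    obtain F G where F: "finite F" "F \<subseteq> X" "x \<in> gen F" and G: "finite G" "G \<subseteq> X" "y \<in> gen G"
      using xy unfolding T_def by blast
    have "x \<in> gen (F \<union> G)" "y \<in> gen (F \<union> G)"
      using gen_mono[of F "F \<union> G"] gen_mono[of G "F \<union> G"] F(3) G(3) by blast+
    then have "f x y \<in> gen (F \<union> G)"
      by (rule f)
    then show ?thesis
      unfolding T_def using F G by blast
  qed
  have "subalgebra T"
    unfolding subalgebra_def
  proof (intro conjI ballI)
    show "bot \<in> T" "top \<in> T"
      unfolding T_def using subalgebra_bot subalgebra_top subalgebra_gen by blast+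
  next
    fix x y
    assume "x \<in> T" "y \<in> T"
    show "inf x y \<in> T"
      by (rule closed[OF \<open>x \<in> T\<close> \<open>y \<in> T\<close> subalgebra_inf[OF subalgebra_gen]])
    show "sup x y \<in> T"
      by (rule closed[OF \<open>x \<in> T\<close> \<open>y \<in> T\<close> subalgebra_sup[OF subalgebra_gen]])
  next
    fix x
    assume "x \<in> T"
    then show "- x \<in> T"
      unfolding T_def using subalgebra_compl[OF subalgebra_gen] by blast
  qed
  moreover have "X \<subseteq> T"
    unfolding T_def using gen_upper by blast
  ultimately show ?thesis
    using gen_least assms unfolding T_def by blast
qed

inductive_set joins_of_meets :: "'b::boolean_algebra set \<Rightarrow> 'b set \<Rightarrow> 'b set" for C S where
  empty: "bot \<in> joins_of_meets C S"
| meet: "c \<in> C \<Longrightarrow> s \<in> S \<Longrightarrow> inf c s \<in> joins_of_meets C S"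
| join: "x \<in> joins_of_meets C S \<Longrightarrow> y \<in> joins_of_meets C S \<Longrightarrow> sup x y \<in> joins_of_meets C S"

context
  fixes C S :: "'b::boolean_algebra set"
  assumes C: "subalgebra C" and S: "subalgebra S"
begin

lemma joins_of_meets_inf_meet:
  assumes "c \<in> C" "s \<in> S" "y \<in> joins_of_meets C S"
  shows "inf (inf c s) y \<in> joins_of_meets C S"
  using assms(3)
proof (induction y rule: joins_of_meets.induct)
  case (meet c' s')
  have "inf (inf c s) (inf c' s') = inf (inf c c') (inf s s')"
    by (simp add: inf_assoc inf_left_commute)
  moreover have "inf c c' \<in> C" "inf s s' \<in> S"
    using meet assms(1,2) C S subalgebra_inf by blast+
  ultimately show ?case
    using joins_of_meets.meet by metis
qed (simp_all add: joins_of_meets.intros inf_sup_distrib1)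

lemma joins_of_meets_inf:
  "x \<in> joins_of_meets C S \<Longrightarrow> y \<in> joins_of_meets C S \<Longrightarrow> inf x y \<in> joins_of_meets C S"
  by (induction x rule: joins_of_meets.induct)
    (simp_all add: joins_of_meets.intros joins_of_meets_inf_meet inf_sup_distrib2)

lemma joins_of_meets_compl:
  "x \<in> joins_of_meets C S \<Longrightarrow> - x \<in> joins_of_meets C S"
proof (induction x rule: joins_of_meets.induct)
  case empty
  show ?case
    using joins_of_meets.meet[OF subalgebra_top[OF C] subalgebra_top[OF S]] by simp
next
  case (meet c s)
  have "sup (inf (- c) top) (inf top (- s)) \<in> joins_of_meets C S"
    using meet C S by (intro joins_of_meets.join joins_of_meets.meet)
      (simp_all add: subalgebra_top subalgebra_compl)
  then show ?case
    by simp
next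
  case (join x y)
  then show ?case
    using joins_of_meets_inf by simp
qed

lemma subalgebra_joins_of_meets: "subalgebra (joins_of_meets C S)"
  unfolding subalgebra_def
proof (intro conjI ballI)
  show "bot \<in> joins_of_meets C S"
    by (rule joins_of_meets.empty)
  show "top \<in> joins_of_meets C S"
    using joins_of_meets_compl[OF joins_of_meets.empty] by simp
qed (simp_all add: joins_of_meets.join joins_of_meets_inf joins_of_meets_compl)

lemma gen_Un_subset_joins_of_meets: "gen (C \<union> S) \<subseteq> joins_of_meets C S"
proof (rule gen_least[OF subalgebra_joins_of_meets], rule subsetI)
  fix x
  assume "x \<in> C \<union> S"
  then show "x \<in> joins_of_meets C S"
  proof
    assume "x \<in> C"
    then show ?thesis
      using joins_of_meets.meet[OF _ subalgebra_top[OF S], of x] by simp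
  next
    assume "x \<in> S"
    then show ?thesis
      using joins_of_meets.meet[OF subalgebra_top[OF C], of x] by simp
  qed
qed

end

lemma subalgebra_E: "subalgebra (E S \<Gamma>)"
  unfolding E_def by (rule subalgebra_gen)

lemma E_mono: "\<Gamma> \<subseteq> \<Gamma>' \<Longrightarrow> E S \<Gamma> \<subseteq> E S \<Gamma>'"
  unfolding E_def by (rule gen_mono) blast

lemma S_subset_E: "\<alpha> \<in> \<Gamma> \<Longrightarrow> S \<alpha> \<subseteq> E S \<Gamma>"
  unfolding E_def using gen_upper by blast

lemma E_finite_stage:
  fixes S :: "'o::wellorder \<Rightarrow> 'b::boolean_algebra set"
  assumes "x \<in> E S \<Gamma>"
  shows "x \<in> {bot, top} \<or> (\<exists>\<beta>\<in>\<Gamma>. x \<in> E S (\<Gamma> \<inter> {..\<beta>}))"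
proof -
  obtain F where F: "finite F" "F \<subseteq> \<Union> (S ` \<Gamma>)" "x \<in> gen F"
    using gen_finite_support assms unfolding E_def by blast
  show ?thesis
  proof (cases "F = {}")
    case True
    then show ?thesis
      using F(3) gen_empty by blast
  next
    case False
    have "\<forall>f\<in>F. \<exists>\<beta>\<in>\<Gamma>. f \<in> S \<beta>"
      using F(2) by blast
    then obtain b where b: "\<forall>f\<in>F. b f \<in> \<Gamma> \<and> f \<in> S (b f)"
      by metis
    define m where "m = Max (b ` F)"
    have "m \<in> b ` F"
      unfolding m_def using False F(1) by simp
    then have "m \<in> \<Gamma>"
      using b by blast
    moreover have "F \<subseteq> \<Union> (S ` (\<Gamma> \<inter> {..m}))"
    proof
      fix f
      assume "f \<in> F"
      then have "b f \<le> m"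
        unfolding m_def using F(1) by simp
      with \<open>f \<in> F\<close> b show "f \<in> \<Union> (S ` (\<Gamma> \<inter> {..m}))"
        by blast
    qed
    then have "x \<in> E S (\<Gamma> \<inter> {..m})"
      unfolding E_def using gen_mono F(3) by blast
    ultimately show ?thesis
      by blast
  qed
qed

lemma E_atMost_eq_lessThan:
  fixes \<alpha> :: "'o::wellorder"
  assumes "\<alpha> \<notin> \<Gamma>"
  shows "E S (\<Gamma> \<inter> {..\<alpha>}) = E S (\<Gamma> \<inter> {..<\<alpha>})"
proof -
  have "\<Gamma> \<inter> {..\<alpha>} = \<Gamma> \<inter> {..<\<alpha>}"
    using assms by (auto simp: le_less)
  then show ?thesis
    by simp
qed

lemma saturated_Union:
  assumes "\<forall>X\<in>\<X>. saturated R S X"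
  shows "saturated R S (\<Union> \<X>)"
  unfolding saturated_def
proof
  fix \<gamma>
  assume "\<gamma> \<in> \<Union> \<X>"
  then obtain X where "X \<in> \<X>" "\<gamma> \<in> X"
    by blast
  then have "R \<gamma> \<subseteq> E S (X \<inter> {..<\<gamma>})"
    using assms unfolding saturated_def by blast
  also have "\<dots> \<subseteq> E S (\<Union> \<X> \<inter> {..<\<gamma>})"
    using \<open>X \<in> \<X>\<close> by (intro E_mono) blast
  finally show "R \<gamma> \<subseteq> E S (\<Union> \<X> \<inter> {..<\<gamma>})" .
qed

definition separates :: "'b::boolean_algebra set \<Rightarrow> 'b \<Rightarrow> 'b \<Rightarrow> bool" where
  "separates D x y \<longleftrightarrow> (\<exists>d\<in>D. x \<le> d \<and> inf d y = bot)"

lemma separates_sym: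
  assumes "subalgebra D" "separates D x y"
  shows "separates D y x"
proof -
  obtain d where "d \<in> D" "x \<le> d" "inf d y = bot"
    using assms(2) unfolding separates_def by blast
  moreover have "y \<le> - d"
    using \<open>inf d y = bot\<close> by (metis inf_shunt compl_le_swap1)
  moreover have "inf (- d) x = bot"
    using \<open>x \<le> d\<close> by (simp add: inf_shunt)
  ultimately show ?thesis
    using assms(1) subalgebra_compl unfolding separates_def by blast
qed

lemma separates_mono: "D \<subseteq> D' \<Longrightarrow> separates D x y \<Longrightarrow> separates D' x y"
  unfolding separates_def by blast

lemma separates_bot_left: "subalgebra D \<Longrightarrow> separates D bot y"
  unfolding separates_def by (intro bexI[of _ bot] conjI subalgebra_bot) simp_all

lemma separates_bot_right: "subalgebra D \<Longrightarrow> separates D x bot"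
  unfolding separates_def by (intro bexI[of _ top] conjI subalgebra_top) simp_all

lemma separates_trivial:
  assumes "subalgebra D" "x \<in> {bot, top} \<or> y \<in> {bot, top}" "inf x y = bot"
  shows "separates D x y"
proof -
  have "x = bot \<or> y = bot"
    using assms(2,3) by auto
  then show ?thesis
    using separates_bot_left[OF assms(1)] separates_bot_right[OF assms(1)] by blast
qed

lemma separates_antimono:
  assumes "separates D x y" "x' \<le> x" "y' \<le> y"
  shows "separates D x' y'"
proof -
  obtain d where "d \<in> D" "x \<le> d" "inf d y = bot"
    using assms(1) unfolding separates_def by blast
  moreover have "inf d y' = bot"
    using inf_mono[OF order_refl assms(3), of d] \<open>inf d y = bot\<close> by (simp add: le_bot)
  ultimately show ?thesis
    unfolding separates_def using order_trans[OF assms(2)] by blast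
qed

lemma separates_sup_left:
  assumes "subalgebra D" "separates D x z" "separates D y z"
  shows "separates D (sup x y) z"
proof -
  obtain dx dy where "dx \<in> D" "x \<le> dx" "inf dx z = bot" "dy \<in> D" "y \<le> dy" "inf dy z = bot"
    using assms(2,3) unfolding separates_def by blast
  moreover from calculation have "sup x y \<le> sup dx dy" "inf (sup dx dy) z = bot"
    by (simp_all add: le_supI1 le_supI2 inf_sup_distrib2)
  ultimately show ?thesis
    unfolding separates_def using subalgebra_sup[OF assms(1)] by blast
qed

lemma separates_sup_right:
  assumes "subalgebra D" "separates D x y" "separates D x z"
  shows "separates D x (sup y z)"
  using assms separates_sup_left separates_sym by blast

lemma separates_inf_right:
  assumes "subalgebra D" "u \<in> D" "separates D (inf x u) y"
  shows "separates D x (inf y u)"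
proof -
  obtain d where "d \<in> D" "inf x u \<le> d" "inf d y = bot"
    using assms(3) unfolding separates_def by blast
  moreover have "x \<le> sup d (- u)"
    using \<open>inf x u \<le> d\<close> shunt1[of x u d] by (simp add: sup_commute)
  moreover have "inf (sup d (- u)) (inf y u) = bot"
    using \<open>inf d y = bot\<close> by (simp add: inf_sup_distrib2 inf_assoc[symmetric])
  ultimately show ?thesis
    unfolding separates_def using subalgebra_sup[OF assms(1)] subalgebra_compl[OF assms(1,2)] by blast
qed

lemma commute_separates:
  assumes "commute A S" "a \<in> A" "s \<in> S" "inf a s = bot"
  shows "separates (A \<inter> S) s a"
proof -
  obtain b1 b2 where "b1 \<in> A \<inter> S" "b2 \<in> A \<inter> S" "a \<le> b1" "s \<le> b2" "inf b1 b2 = bot"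
    using assms unfolding commute_def by blast
  moreover from calculation have "inf b2 a = bot"
    by (metis inf_commute inf_mono order_refl le_bot)
  ultimately show ?thesis
    unfolding separates_def by blast
qed

fun bsubst :: "nat \<Rightarrow> bpoly \<Rightarrow> bpoly \<Rightarrow> bpoly" where
  "bsubst k Q (Var i) = (if i = k then Q else Var i)"
| "bsubst k Q Zero = Zero"
| "bsubst k Q One = One"
| "bsubst k Q (Meet p q) = Meet (bsubst k Q p) (bsubst k Q q)"
| "bsubst k Q (Join p q) = Join (bsubst k Q p) (bsubst k Q q)"
| "bsubst k Q (Neg p) = Neg (bsubst k Q p)"

lemma beval_bsubst: "beval (bsubst k Q P) v = beval P (v(k := beval Q v))"
  by (induction P) auto

lemma beval_cong: "(\<forall>i\<in>bvars P. v i = w i) \<Longrightarrow> beval P v = beval P w"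
  by (induction P) auto

lemma finite_bvars: "finite (bvars P)"
  by (induction P) auto

lemma beval_closed: "subalgebra A \<Longrightarrow> (\<forall>i. v i \<in> A) \<Longrightarrow> beval P v \<in> A"
  by (induction P) (auto simp: subalgebra_def)

text \<open>Meeting with a fixed element c is a Boolean homomorphism onto the interval below c.\<close>
lemma beval_inf_cong:
  fixes v w :: "nat \<Rightarrow> 'b::boolean_algebra"
  assumes "\<And>i. inf c (v i) = inf c (w i)"
  shows "inf c (beval P v) = inf c (beval P w)"
proof (induction P)
  case (Meet p q)
  have "inf c (inf x y) = inf (inf c x) (inf c y)" for x y :: 'b
    by (simp add: inf.assoc inf.left_commute)
  with Meet show ?case
    by simp
next
  case (Neg p)
  have "inf c (- x) = inf c (- inf c x)" for x :: 'b
    by (simp add: inf_sup_distrib1)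
  with Neg show ?case
    by (metis beval.simps(6))
qed (simp_all add: assms inf_sup_distrib1)

lemma beval_shannon:
  "beval P v = sup (inf (v k) (beval P (v(k := top)))) (inf (- v k) (beval P (v(k := bot))))"
proof -
  have "inf (v k) (beval P v) = inf (v k) (beval P (v(k := top)))"
    by (rule beval_inf_cong) simp
  moreover have "inf (- v k) (beval P v) = inf (- v k) (beval P (v(k := bot)))"
    by (rule beval_inf_cong) simp
  moreover have "beval P v = sup (inf (v k) (beval P v)) (inf (- v k) (beval P v))"
    by (simp flip: inf_sup_distrib2)
  ultimately show ?thesis
    by simp
qed

lemma beval_eq_bot_iff_cofactors:
  "beval P v = bot \<longleftrightarrow>
     inf (v k) (beval P (v(k := top))) = bot \<and> inf (- v k) (beval P (v(k := bot))) = bot"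
  by (subst beval_shannon[of P v k]) simp

lemma beval_eq_bot_if_cofactors_bounded:
  assumes "inf e1 (beval P (v(k := top))) = bot" "inf e0 (beval P (v(k := bot))) = bot"
    and "v k \<le> e1" "- v k \<le> e0"
  shows "beval P v = bot"
proof -
  have "inf (v k) (beval P (v(k := top))) \<le> inf e1 (beval P (v(k := top)))"
    using assms(3) by (rule inf_mono[OF _ order_refl])
  moreover have "inf (- v k) (beval P (v(k := bot))) \<le> inf e0 (beval P (v(k := bot)))"
    using assms(4) by (rule inf_mono[OF _ order_refl])
  ultimately show ?thesis
    unfolding beval_eq_bot_iff_cofactors[of P v k] using assms(1,2) by (simp add: le_bot)
qed

definition guarded_cofactors :: "nat \<Rightarrow> nat \<Rightarrow> nat \<Rightarrow> bpoly \<Rightarrow> bpoly" where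
  "guarded_cofactors k k1 k0 P = Join (Meet (Var k1) (bsubst k One P)) (Meet (Var k0) (bsubst k Zero P))"

lemma beval_guarded_cofactors:
  assumes "k1 \<noteq> k0" "k1 \<notin> bvars P" "k0 \<notin> bvars P"
  shows "beval (guarded_cofactors k k1 k0 P) (v(k := x, k1 := e1, k0 := e0)) =
    sup (inf e1 (beval P (v(k := top)))) (inf e0 (beval P (v(k := bot))))"
proof -
  have "beval P (v(k := x, k1 := e1, k0 := e0, k := c)) = beval P (v(k := c))" for c
    using assms by (intro beval_cong) auto
  then show ?thesis
    using assms(1) unfolding guarded_cofactors_def by (simp add: beval_bsubst)
qed

lemma beval_eq_bot_if_guarded_cofactors:
  assumes "k1 \<noteq> k0" "k1 \<notin> bvars P" "k0 \<notin> bvars P"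
    and "beval (guarded_cofactors k k1 k0 P) (v(k := x, k1 := e1, k0 := e0)) = bot"
    and "v k \<le> e1" "- v k \<le> e0"
  shows "beval P v = bot"
  using assms(4-) unfolding beval_guarded_cofactors[OF assms(1-3)]
  by (intro beval_eq_bot_if_cofactors_bounded) simp_all

lemma guarded_cofactors_zeros:
  fixes rm rp a :: "nat \<Rightarrow> 'b::boolean_algebra"
  assumes fresh: "k \<notin> V" "k1 \<notin> V \<union> bvars P" "k0 \<notin> insert k1 (V \<union> bvars P)"
    and "- e0 \<le> e1"
    and zeros: "\<forall>w. (\<forall>i\<in>V. w i = rm i \<or> w i = rp i) \<longrightarrow>
      (\<forall>i. i \<notin> V \<longrightarrow> w i = (a(k := bot, k1 := e1, k0 := e0)) i) \<longrightarrow>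
      beval (guarded_cofactors k k1 k0 P) w = bot"
    and w: "\<forall>i\<in>insert k V. w i = (rm(k := - e0)) i \<or> w i = (rp(k := e1)) i"
    and w_out: "\<forall>i. i \<notin> insert k V \<longrightarrow> w i = a i"
  shows "beval P w = bot"
proof (rule beval_eq_bot_if_guarded_cofactors)
  have "\<forall>i\<in>V. (w(k := bot, k1 := e1, k0 := e0)) i = rm i \<or> (w(k := bot, k1 := e1, k0 := e0)) i = rp i"
    using w fresh by (metis UnCI fun_upd_other insertCI)
  moreover have "\<forall>i. i \<notin> V \<longrightarrow> (w(k := bot, k1 := e1, k0 := e0)) i = (a(k := bot, k1 := e1, k0 := e0)) i"
    using w_out by simp
  ultimately show "beval (guarded_cofactors k k1 k0 P) (w(k := bot, k1 := e1, k0 := e0)) = bot"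
    using zeros by blast
  have "w k = - e0 \<or> w k = e1"
    using w by simp
  then show "w k \<le> e1" "- w k \<le> e0"
    using \<open>- e0 \<le> e1\<close> compl_le_swap2 by auto
qed (use fresh in auto)

locale tight_filtration =
  fixes B R S :: "'o::wellorder \<Rightarrow> 'b::boolean_algebra set"
  assumes tight: "tightly_sigma_filtered B R S"
begin

lemma pushout_stage: "pushout (R \<alpha>) (B \<alpha>) (S \<alpha>) (next_stage B \<alpha>)"
  using tight unfolding tightly_sigma_filtered_def by blast

lemma subalgebra_B: "subalgebra (B \<alpha>)"
  using pushout_stage unfolding pushout_def by blast

lemma subalgebra_S: "subalgebra (S \<alpha>)"
  using pushout_stage unfolding pushout_def by blast

lemma S_subset_B:
  assumes "\<beta> < \<alpha>"
  shows "S \<beta> \<subseteq> B \<alpha>"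
proof -
  have "next_stage B \<beta> = B (LEAST \<gamma>. \<beta> < \<gamma>)"
    unfolding next_stage_def using assms by auto
  then have "S \<beta> \<subseteq> B (LEAST \<gamma>. \<beta> < \<gamma>)"
    using pushout_stage[of \<beta>] unfolding pushout_def by auto
  also have "\<dots> \<subseteq> B \<alpha>"
    using tight assms Least_le[of "\<lambda>\<gamma>. \<beta> < \<gamma>" \<alpha>]
    unfolding tightly_sigma_filtered_def by (simp add: monoD)
  finally show ?thesis .
qed

lemma E_lessThan_subset_B: "E S (\<Gamma> \<inter> {..<\<alpha>}) \<subseteq> B \<alpha>"
  unfolding E_def using S_subset_B tight
  by (intro gen_least) (auto simp: tightly_sigma_filtered_def)

lemma separates_R:
  assumes "c \<in> B \<alpha>" "s \<in> S \<alpha>" "inf c s = bot"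
  shows "separates (R \<alpha>) s c"
  using commute_separates[OF _ assms] pushout_stage[of \<alpha>] unfolding pushout_def by metis

lemma E_atMost_subset_joins_of_meets:
  assumes "\<alpha> \<in> \<Gamma>"
  shows "E S (\<Gamma> \<inter> {..\<alpha>}) \<subseteq> joins_of_meets (E S (\<Gamma> \<inter> {..<\<alpha>})) (S \<alpha>)"
proof -
  have "\<Union> (S ` (\<Gamma> \<inter> {..\<alpha>})) \<subseteq> E S (\<Gamma> \<inter> {..<\<alpha>}) \<union> S \<alpha>"
  proof
    fix x
    assume "x \<in> \<Union> (S ` (\<Gamma> \<inter> {..\<alpha>}))"
    then obtain \<beta> where "\<beta> \<in> \<Gamma>" "\<beta> \<le> \<alpha>" "x \<in> S \<beta>"
      by blast
    then show "x \<in> E S (\<Gamma> \<inter> {..<\<alpha>}) \<union> S \<alpha>"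
      using S_subset_E[of \<beta> "\<Gamma> \<inter> {..<\<alpha>}" S] by (cases "\<beta> = \<alpha>") (auto simp: le_less)
  qed
  also have "\<dots> \<subseteq> gen (E S (\<Gamma> \<inter> {..<\<alpha>}) \<union> S \<alpha>)"
    by (rule gen_upper)
  finally have "E S (\<Gamma> \<inter> {..\<alpha>}) \<subseteq> gen (E S (\<Gamma> \<inter> {..<\<alpha>}) \<union> S \<alpha>)"
    unfolding E_def[of S "\<Gamma> \<inter> {..\<alpha>}"] using gen_least subalgebra_gen by blast
  also have "\<dots> \<subseteq> joins_of_meets (E S (\<Gamma> \<inter> {..<\<alpha>})) (S \<alpha>)"
    by (rule gen_Un_subset_joins_of_meets[OF subalgebra_E subalgebra_S])
  finally show ?thesis .
qed

definition interpolates_upto :: "'o set \<Rightarrow> 'o set \<Rightarrow> 'o \<Rightarrow> bool" where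
  "interpolates_upto G1 G2 \<beta> \<longleftrightarrow>
     (\<forall>a1\<in>E S (G1 \<inter> {..\<beta>}). \<forall>a2\<in>E S (G2 \<inter> {..\<beta>}).
        inf a1 a2 = bot \<longrightarrow> separates (E S (G1 \<inter> G2)) a1 a2)"

lemma interpolates_upto_sym:
  assumes "interpolates_upto G1 G2 \<beta>"
  shows "interpolates_upto G2 G1 \<beta>"
  unfolding interpolates_upto_def
proof (intro ballI impI)
  fix a2 a1
  assume "a2 \<in> E S (G2 \<inter> {..\<beta>})" "a1 \<in> E S (G1 \<inter> {..\<beta>})" "inf a2 a1 = bot"
  moreover from calculation(3) have "inf a1 a2 = bot"
    by (simp add: inf_commute)
  ultimately have "separates (E S (G1 \<inter> G2)) a1 a2"
    using assms unfolding interpolates_upto_def by blast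
  then show "separates (E S (G2 \<inter> G1)) a2 a1"
    using separates_sym[OF subalgebra_E] by (simp add: Int_commute)
qed

lemma separates_if_interpolates_upto:
  assumes "\<forall>\<beta>\<in>X. interpolates_upto G1 G2 \<beta>"
    and "a1 \<in> E S (G1 \<inter> X)" "a2 \<in> E S (G2 \<inter> X)" "inf a1 a2 = bot"
  shows "separates (E S (G1 \<inter> G2)) a1 a2"
proof (cases "a1 \<in> {bot, top} \<or> a2 \<in> {bot, top}")
  case True
  then show ?thesis
    using separates_trivial[OF subalgebra_E] assms(4) by blast
next
  case False
  then obtain \<beta>1 \<beta>2 where "\<beta>1 \<in> G1 \<inter> X" "a1 \<in> E S (G1 \<inter> X \<inter> {..\<beta>1})"
      and "\<beta>2 \<in> G2 \<inter> X" "a2 \<in> E S (G2 \<inter> X \<inter> {..\<beta>2})"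
    using E_finite_stage[OF assms(2)] E_finite_stage[OF assms(3)] by meson
  moreover define \<beta> where "\<beta> = max \<beta>1 \<beta>2"
  moreover have "E S (G1 \<inter> X \<inter> {..\<beta>1}) \<subseteq> E S (G1 \<inter> {..\<beta>})"
    "E S (G2 \<inter> X \<inter> {..\<beta>2}) \<subseteq> E S (G2 \<inter> {..\<beta>})"
    unfolding \<beta>_def by (intro E_mono; auto simp: le_max_iff_disj)+
  moreover have "\<beta> \<in> X"
    using calculation(1,3) unfolding \<beta>_def max_def by simp
  ultimately show ?thesis
    using assms(1,4) unfolding interpolates_upto_def by blast
qed

lemma separates_atMost_lessThan:
  assumes sat1: "saturated R S G1"
    and IH: "\<forall>\<beta><\<alpha>. interpolates_upto G1 G2 \<beta>"
    and a1: "a1 \<in> E S (G1 \<inter> {..\<alpha>})" and a2: "a2 \<in> E S (G2 \<inter> {..<\<alpha>})"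
    and disj: "inf a1 a2 = bot"
  shows "separates (E S (G1 \<inter> G2)) a1 a2"
proof -
  let ?C = "E S (G1 \<inter> {..<\<alpha>})" and ?D = "E S (G1 \<inter> G2)"
  have IH': "\<forall>\<beta>\<in>{..<\<alpha>}. interpolates_upto G1 G2 \<beta>"
    using IH by simp
  show ?thesis
  proof (cases "\<alpha> \<in> G1")
    case False
    then show ?thesis
      using a1 E_atMost_eq_lessThan[OF False, of S] separates_if_interpolates_upto[OF IH' _ a2 disj] by simp
  next
    case True
    have "separates ?D x a2" if "x \<in> joins_of_meets ?C (S \<alpha>)" "inf x a2 = bot" for x
      using that
    proof (induction x rule: joins_of_meets.induct)
      case empty
      show ?case
        by (rule separates_bot_left[OF subalgebra_E])
    next
      case (meet c s)
      have "inf c a2 \<in> B \<alpha>"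
        using meet.hyps(1) a2 E_lessThan_subset_B subalgebra_inf[OF subalgebra_B] by blast
      moreover have "inf (inf c a2) s = bot"
        using meet.prems by (simp add: inf_assoc inf_left_commute inf_commute)
      \<comment> \<open>the push-out enlarges s to some t in R \<alpha>, which saturation puts into ?C\<close>
      ultimately obtain t where "t \<in> R \<alpha>" "s \<le> t" "inf t (inf c a2) = bot"
        using separates_R[OF _ meet.hyps(2)] unfolding separates_def by blast
      have "t \<in> ?C"
        using sat1 True \<open>t \<in> R \<alpha>\<close> unfolding saturated_def by blast
      then have "inf c t \<in> ?C"
        using meet.hyps(1) subalgebra_inf[OF subalgebra_E] by blast
      moreover have "inf (inf c t) a2 = bot"
        using \<open>inf t (inf c a2) = bot\<close> by (simp add: inf_assoc inf_left_commute inf_commute)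
      ultimately have "separates ?D (inf c t) a2"
        using separates_if_interpolates_upto[OF IH' _ a2] by blast
      then show ?case
        using separates_antimono inf_mono[OF order_refl \<open>s \<le> t\<close>] by blast
    next
      case (join x y)
      then show ?case
        using separates_sup_left[OF subalgebra_E] by (simp add: inf_sup_distrib2)
    qed
    then show ?thesis
      using E_atMost_subset_joins_of_meets[OF True] a1 disj by blast
  qed
qed

lemma interpolates_upto_step:
  assumes sat1: "saturated R S G1" and sat2: "saturated R S G2"
    and IH: "\<forall>\<beta><\<alpha>. interpolates_upto G1 G2 \<beta>"
  shows "interpolates_upto G1 G2 \<alpha>"
  unfolding interpolates_upto_def
proof (intro ballI impI)
  fix a1 a2
  assume a1: "a1 \<in> E S (G1 \<inter> {..\<alpha>})" and a2: "a2 \<in> E S (G2 \<inter> {..\<alpha>})" and disj: "inf a1 a2 = bot"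
  let ?D = "E S (G1 \<inter> G2)"
  consider "\<alpha> \<notin> G2" | "\<alpha> \<notin> G1" | "\<alpha> \<in> G1 \<inter> G2"
    by blast
  then show "separates ?D a1 a2"
  proof cases
    case 1
    then have "a2 \<in> E S (G2 \<inter> {..<\<alpha>})"
      using a2 E_atMost_eq_lessThan[OF 1, of S] by simp
    then show ?thesis
      by (rule separates_atMost_lessThan[OF sat1 IH a1 _ disj])
  next
    case 2
    then have "a1 \<in> E S (G1 \<inter> {..<\<alpha>})"
      using a1 E_atMost_eq_lessThan[OF 2, of S] by simp
    moreover have "\<forall>\<beta><\<alpha>. interpolates_upto G2 G1 \<beta>"
      using IH interpolates_upto_sym by blast
    moreover have "inf a2 a1 = bot"
      using disj by (simp add: inf_commute)
    ultimately have "separates (E S (G2 \<inter> G1)) a2 a1"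
      using separates_atMost_lessThan[OF sat2 _ a2] by blast
    then show ?thesis
      using separates_sym[OF subalgebra_E] by (simp add: Int_commute)
  next
    case 3
    let ?C = "E S (G2 \<inter> {..<\<alpha>})"
    have "separates ?D a1 y" if "y \<in> joins_of_meets ?C (S \<alpha>)" "inf a1 y = bot" for y
      using that
    proof (induction y rule: joins_of_meets.induct)
      case empty
      show ?case
        by (rule separates_bot_right[OF subalgebra_E])
    next
      case (meet e u)
      have "u \<in> ?D"
        using S_subset_E[of \<alpha> "G1 \<inter> G2" S] 3 meet.hyps(2) by blast
      moreover have "u \<in> E S (G1 \<inter> {..\<alpha>})"
        using S_subset_E[of \<alpha> "G1 \<inter> {..\<alpha>}" S] 3 meet.hyps(2) by blast
      then have "inf a1 u \<in> E S (G1 \<inter> {..\<alpha>})"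
        using a1 subalgebra_inf[OF subalgebra_E] by blast
      moreover have "inf (inf a1 u) e = bot"
        using meet.prems by (simp add: inf_assoc inf_left_commute inf_commute)
      ultimately show ?case
        using separates_inf_right[OF subalgebra_E] separates_atMost_lessThan[OF sat1 IH _ meet.hyps(1)]
        by blast
    next
      case (join x y)
      then show ?case
        using separates_sup_right[OF subalgebra_E] by (simp add: inf_sup_distrib1)
    qed
    moreover have "a2 \<in> joins_of_meets ?C (S \<alpha>)"
      using E_atMost_subset_joins_of_meets[of \<alpha> G2] 3 a2 by blast
    ultimately show ?thesis
      using disj by blast
  qed
qed

theorem interpolation:
  assumes "saturated R S G1" "saturated R S G2" "a1 \<in> E S G1" "a2 \<in> E S G2" "inf a1 a2 = bot"
  shows "separates (E S (G1 \<inter> G2)) a1 a2"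
proof -
  have "interpolates_upto G1 G2 \<alpha>" for \<alpha>
    by (induction \<alpha> rule: less_induct) (use interpolates_upto_step[OF assms(1,2)] in blast)
  then have all: "\<forall>\<beta>\<in>UNIV. interpolates_upto G1 G2 \<beta>"
    by blast
  show ?thesis
    using separates_if_interpolates_upto[OF all, of a1 a2] assms(3-5) by simp
qed

lemma cofactor_interpolants:
  assumes "saturated R S \<Gamma>" "saturated R S G" "\<Gamma> \<inter> G \<subseteq> \<Delta>"
    and "a k \<in> E S \<Gamma>" "\<forall>i. i \<noteq> k \<longrightarrow> a i \<in> E S G" "beval P a = bot"
  obtains e1 e0 where "e1 \<in> E S \<Delta>" "e0 \<in> E S \<Delta>" "a k \<le> e1" "- a k \<le> e0"
    "inf e1 (beval P (a(k := top))) = bot" "inf e0 (beval P (a(k := bot))) = bot"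
proof -
  have cofactor: "beval P (a(k := c)) \<in> E S G" if "c \<in> E S G" for c
    using assms(5) that by (intro beval_closed[OF subalgebra_E]) simp
  have "- a k \<in> E S \<Gamma>"
    using assms(4) by (rule subalgebra_compl[OF subalgebra_E])
  moreover have "inf (a k) (beval P (a(k := top))) = bot" "inf (- a k) (beval P (a(k := bot))) = bot"
    using assms(6) beval_eq_bot_iff_cofactors by blast+
  ultimately have "separates (E S (\<Gamma> \<inter> G)) (a k) (beval P (a(k := top)))"
    "separates (E S (\<Gamma> \<inter> G)) (- a k) (beval P (a(k := bot)))"
    using interpolation[OF assms(1,2)] assms(4) cofactor subalgebra_top subalgebra_bot subalgebra_E
    by blast+
  then have "separates (E S \<Delta>) (a k) (beval P (a(k := top)))"
    "separates (E S \<Delta>) (- a k) (beval P (a(k := bot)))"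
    using separates_mono[OF E_mono[OF assms(3)]] by blast+
  then show ?thesis
    using that unfolding separates_def by blast
qed

lemma variable_interpolants:
  assumes sat\<Delta>: "saturated R S \<Delta>" and "k \<notin> V"
    and sat: "\<forall>i\<in>insert k V. saturated R S (\<Gamma> i)"
    and disj: "\<forall>i\<in>insert k V. \<forall>j\<in>insert k V. i \<noteq> j \<longrightarrow> \<Gamma> i \<inter> \<Gamma> j \<subseteq> \<Delta>"
    and a_in: "\<forall>i\<in>insert k V. a i \<in> E S (\<Gamma> i)" and a_out: "\<forall>i. i \<notin> insert k V \<longrightarrow> a i \<in> E S \<Delta>"
    and "beval P a = bot"
  obtains e1 e0 where "e1 \<in> E S \<Delta>" "e0 \<in> E S \<Delta>" "a k \<le> e1" "- a k \<le> e0"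
    "inf e1 (beval P (a(k := top))) = bot" "inf e0 (beval P (a(k := bot))) = bot"
proof -
  define G where "G = \<Union> (insert \<Delta> (\<Gamma> ` V))"
  have "saturated R S G"
    unfolding G_def using sat\<Delta> sat by (intro saturated_Union) blast
  moreover have "\<Gamma> k \<inter> G \<subseteq> \<Delta>"
  proof
    fix x
    assume x: "x \<in> \<Gamma> k \<inter> G"
    show "x \<in> \<Delta>"
    proof (cases "x \<in> \<Delta>")
      case False
      then obtain i where "i \<in> V" "x \<in> \<Gamma> i"
        using x unfolding G_def by blast
      moreover from this have "\<Gamma> k \<inter> \<Gamma> i \<subseteq> \<Delta>"
        using disj \<open>k \<notin> V\<close> by (metis insertCI)
      ultimately show ?thesis
        using x by blast
    qed
  qed
  moreover have "a i \<in> E S G" if "i \<noteq> k" for i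
  proof (cases "i \<in> V")
    case True
    then have "E S (\<Gamma> i) \<subseteq> E S G"
      unfolding G_def by (intro E_mono) blast
    then show ?thesis
      using a_in True by blast
  next
    case False
    have "E S \<Delta> \<subseteq> E S G"
      unfolding G_def by (intro E_mono) blast
    then show ?thesis
      using a_out False that by blast
  qed
  ultimately show ?thesis
    using cofactor_interpolants[OF _ _ _ _ _ \<open>beval P a = bot\<close>] sat a_in that by blast
qed

lemma finite_interpolation:
  assumes sat\<Delta>: "saturated R S \<Delta>" and "finite V"
    and "\<forall>i\<in>V. saturated R S (\<Gamma> i)" and "\<forall>i\<in>V. \<forall>j\<in>V. i \<noteq> j \<longrightarrow> \<Gamma> i \<inter> \<Gamma> j \<subseteq> \<Delta>"
    and "\<forall>i\<in>V. a i \<in> E S (\<Gamma> i)" and "\<forall>i. i \<notin> V \<longrightarrow> a i \<in> E S \<Delta>" and "beval P a = bot"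
  shows "\<exists>rm rp. (\<forall>i\<in>V. rm i \<in> E S \<Delta> \<and> rp i \<in> E S \<Delta> \<and> rm i \<le> a i \<and> a i \<le> rp i) \<and>
           (\<forall>w. (\<forall>i\<in>V. w i = rm i \<or> w i = rp i) \<longrightarrow> (\<forall>i. i \<notin> V \<longrightarrow> w i = a i) \<longrightarrow>
              beval P w = bot)"
  using assms(2-)
proof (induction V arbitrary: P a rule: finite_induct)
  case empty
  then show ?case
    by (simp flip: fun_eq_iff)
next
  case (insert k V)
  obtain e1 e0 where e: "e1 \<in> E S \<Delta>" "e0 \<in> E S \<Delta>" "a k \<le> e1" "- a k \<le> e0"
      "inf e1 (beval P (a(k := top))) = bot" "inf e0 (beval P (a(k := bot))) = bot"
    by (rule variable_interpolants[OF sat\<Delta> insert.hyps(2) insert.prems])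
  obtain k1 k0 where k1: "k1 \<notin> V \<union> bvars P" and k0: "k0 \<notin> insert k1 (V \<union> bvars P)"
    using ex_new_if_finite[OF infinite_UNIV_nat] insert.hyps(1) finite_bvars
    by (metis finite_Un finite_insert)
  define P' where "P' = guarded_cofactors k k1 k0 P"
  define a' where "a' = a(k := bot, k1 := e1, k0 := e0)"
  have upd_V: "(w(k := bot, k1 := e1, k0 := e0)) i = w i" if "i \<in> V" for w :: "nat \<Rightarrow> 'b" and i
    using that k1 k0 insert.hyps(2) by auto
  have "\<forall>i\<in>V. a' i \<in> E S (\<Gamma> i)"
    using insert.prems(3) upd_V unfolding a'_def by simp
  moreover have "\<forall>i. i \<notin> V \<longrightarrow> a' i \<in> E S \<Delta>"
    using insert.prems(4) e(1,2) subalgebra_bot[OF subalgebra_E] unfolding a'_def by auto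
  moreover have "beval P' a' = bot"
    unfolding P'_def a'_def using k1 k0 e(5,6) by (simp add: beval_guarded_cofactors)
  ultimately have "\<exists>rm rp. (\<forall>i\<in>V. rm i \<in> E S \<Delta> \<and> rp i \<in> E S \<Delta> \<and> rm i \<le> a' i \<and> a' i \<le> rp i) \<and>
      (\<forall>w. (\<forall>i\<in>V. w i = rm i \<or> w i = rp i) \<longrightarrow> (\<forall>i. i \<notin> V \<longrightarrow> w i = a' i) \<longrightarrow>
         beval P' w = bot)"
    using insert.IH insert.prems(1,2) by simp
  then obtain rm rp where
      r: "\<forall>i\<in>V. rm i \<in> E S \<Delta> \<and> rp i \<in> E S \<Delta> \<and> rm i \<le> a' i \<and> a' i \<le> rp i" and
      z: "\<forall>w. (\<forall>i\<in>V. w i = rm i \<or> w i = rp i) \<longrightarrow> (\<forall>i. i \<notin> V \<longrightarrow> w i = a' i) \<longrightarrow>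
            beval P' w = bot"
    by blast
  have "- e0 \<le> a k"
    using e(4) by (rule compl_le_swap2)
  have "(rm(k := - e0)) i \<in> E S \<Delta> \<and> (rp(k := e1)) i \<in> E S \<Delta> \<and>
      (rm(k := - e0)) i \<le> a i \<and> a i \<le> (rp(k := e1)) i" if "i \<in> insert k V" for i
  proof (cases "i = k")
    case True
    then show ?thesis
      using e(1-3) \<open>- e0 \<le> a k\<close> subalgebra_compl[OF subalgebra_E e(2)] by simp
  next
    case False
    with that have "i \<in> V"
      by simp
    then have "rm i \<in> E S \<Delta> \<and> rp i \<in> E S \<Delta> \<and> rm i \<le> a' i \<and> a' i \<le> rp i"
      using r by blast
    moreover have "a' i = a i"
      unfolding a'_def using upd_V[OF \<open>i \<in> V\<close>] .
    ultimately show ?thesis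
      using False by simp
  qed
  moreover have "beval P w = bot"
    if "\<forall>i\<in>insert k V. w i = (rm(k := - e0)) i \<or> w i = (rp(k := e1)) i"
      and "\<forall>i. i \<notin> insert k V \<longrightarrow> w i = a i" for w
    using guarded_cofactors_zeros[OF insert.hyps(2) k1 k0 _ z[unfolded P'_def a'_def]] that
      order_trans[OF \<open>- e0 \<le> a k\<close> e(3)] by blast
  ultimately show ?case
    by (intro exI[of _ "rm(k := - e0)"] exI[of _ "rp(k := e1)"] conjI ballI allI impI) simp_all
qed

end

theorem lemma3p4:
  fixes B R S :: "'o::wellorder \<Rightarrow> 'b::boolean_algebra set"
    and \<Delta> :: "'o set" and \<Gamma> :: "nat \<Rightarrow> 'o set"
    and n :: nat and P :: bpoly and a :: "nat \<Rightarrow> 'b"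
  assumes tsf: "tightly_sigma_filtered B R S"
    and satD: "saturated R S \<Delta>"
    and satG: "\<forall>i<n. saturated R S (\<Gamma> i)"
    and inter: "\<forall>i<n. \<forall>j<n. i \<noteq> j \<longrightarrow> \<Gamma> i \<inter> \<Gamma> j = \<Delta>"
    and vars: "bvars P \<subseteq> {..<n}"
    and a_in: "\<forall>i<n. a i \<in> E S (\<Gamma> i)"
    and P0: "beval P a = bot"
  shows "\<exists>rm rp :: nat \<Rightarrow> 'b.
           (\<forall>i<n. rm i \<in> E S \<Delta> \<and> rp i \<in> E S \<Delta> \<and> rm i \<le> a i \<and> a i \<le> rp i) \<and>
           (\<forall>\<epsilon> :: nat \<Rightarrow> bool. beval P (\<lambda>i. if \<epsilon> i then rp i else rm i) = bot)"
proof -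
  interpret tight_filtration B R S
    by (rule tight_filtration.intro[OF tsf])
  \<comment> \<open>values of a beyond n do not affect P, but parameters must lie in E S \<Delta>\<close>
  define a0 where "a0 i = (if i < n then a i else bot)" for i
  have a0_zero: "beval P a0 = bot"
    using P0 vars unfolding a0_def by (subst beval_cong[of P _ a]) auto
  have prems: "\<forall>i\<in>{..<n}. saturated R S (\<Gamma> i)"
    "\<forall>i\<in>{..<n}. \<forall>j\<in>{..<n}. i \<noteq> j \<longrightarrow> \<Gamma> i \<inter> \<Gamma> j \<subseteq> \<Delta>"
    "\<forall>i\<in>{..<n}. a0 i \<in> E S (\<Gamma> i)" "\<forall>i. i \<notin> {..<n} \<longrightarrow> a0 i \<in> E S \<Delta>"
    using satG inter a_in subalgebra_bot[OF subalgebra_E, of S \<Delta>] by (simp_all add: a0_def)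
  obtain rm rp where
      r: "\<forall>i\<in>{..<n}. rm i \<in> E S \<Delta> \<and> rp i \<in> E S \<Delta> \<and> rm i \<le> a0 i \<and> a0 i \<le> rp i" and
      z: "\<forall>w. (\<forall>i\<in>{..<n}. w i = rm i \<or> w i = rp i) \<longrightarrow> (\<forall>i. i \<notin> {..<n} \<longrightarrow> w i = a0 i) \<longrightarrow>
            beval P w = bot"
    using finite_interpolation[OF satD finite_lessThan prems a0_zero] by blast
  have bounds: "\<forall>i<n. rm i \<in> E S \<Delta> \<and> rp i \<in> E S \<Delta> \<and> rm i \<le> a i \<and> a i \<le> rp i"
    using r by (simp add: a0_def)
  have zero: "beval P (\<lambda>i. if \<epsilon> i then rp i else rm i) = bot" for \<epsilon>
  proof -
    have "beval P (\<lambda>i. if \<epsilon> i then rp i else rm i) = beval P (\<lambda>i. if i < n then if \<epsilon> i then rp i else rm i else a0 i)"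
      using vars by (intro beval_cong) auto
    also have "\<dots> = bot"
      by (rule z[rule_format]) simp_all
    finally show ?thesis .
  qed
  show ?thesis
    by (rule exI[of _ rm], rule exI[of _ rp]) (use bounds zero in blast)
qed

end
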